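(* Let $\mathsf{k}$ be algebraically closed and $\mathsf{P}=(p_{abc})\in\mathsf{k}^8$. The quadratic Jordan algebra $J_{\mathsf{P}}$ defined below is nondegenerate if and only if $D_{\mathscr{H}}(\mathsf{P})\neq0$, where $D_{\mathscr{H}}(\mathsf{P})=p_{111}^2p_{222}^2+p_{112}^2p_{221}^2+p_{121}^2p_{212}^2+p_{122}^2p_{211}^2-2(p_{111}p_{122}p_{211}p_{222}+p_{111}p_{121}p_{212}p_{222}+p_{111}p_{112}p_{221}p_{222}+p_{121}p_{122}p_{211}p_{212}+p_{112}p_{122}p_{211}p_{221}+p_{112}p_{121}p_{212}p_{221})+4(p_{111}p_{122}p_{212}p_{221}+p_{112}p_{121}p_{211}p_{222})$ (Cayley's hyperdeterminant).
   Context: Let $J=\mathsf{k}^9$ with coordinates $u_1,u_2,u_3,x_{ij}$ ($i\in\{1,2\},j\in\{1,2,3\}$); write $\bm{x}_j=(x_{1j},x_{2j})^t$. With the fixed constants $p_{abc}$, put $D^{(1)}_{ij}(x)=p_{1ij}x_{21}-p_{2ij}x_{11}$, $D^{(2)}_{ij}(x)=p_{i1j}x_{22}-p_{i2j}x_{12}$, $D^{(3)}_{ij}(x)=p_{ij1}x_{23}-p_{ij2}x_{13}$ and $D^{(k)}(x)$ the matrix with rows $(-D^{(k)}_{12}(x),D^{(k)}_{11}(x))$, $(-D^{(k)}_{22}(x),D^{(k)}_{21}(x))$; $M^\dagger$ denotes adjugate. Define $\sigma\mapsto\sigma^\sharp$ by $\bm{x}_1^\sharp=-u_1\bm{x}_1+D^{(3)}(x)\bm{x}_2$,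 $\bm{x}_2^\sharp=-u_2\bm{x}_2+D^{(1)}(x)\bm{x}_3$, $\bm{x}_3^\sharp=-u_3\bm{x}_3-D^{(2)}(x)^\dagger\bm{x}_1$, $u_1^\sharp=u_2u_3+\det D^{(1)}(x)$, $u_2^\sharp=u_3u_1+\det D^{(2)}(x)$, $u_3^\sharp=u_1u_2+\det D^{(3)}(x)$. Let $D^{(k)}_{ij}(x^\sharp)$ be $D^{(k)}_{ij}$ evaluated at the coordinates $x^\sharp_{ij}$ of $\sigma^\sharp$, $D^{(k)}(x,x^\sharp)$ the matrix with rows $(-D^{(k)}_{12}(x),D^{(k)}_{11}(x^\sharp))$, $(-D^{(k)}_{22}(x),D^{(k)}_{21}(x^\sharp))$ and $D^{(k)}(x^\sharp,x)$ the matrix with rows $(-D^{(k)}_{12}(x^\sharp),D^{(k)}_{11}(x))$, $(-D^{(k)}_{22}(x^\sharp),D^{(k)}_{21}(x))$. Let $N_{\mathsf{P}}=\tfrac13\sum_{k=1}^3\big(u_ku_k^\sharp-\det D^{(k)}(x,x^\sharp)-\det D^{(k)}(x^\sharp,x)\big)$ (a cubic form with integer coefficients). $J_{\mathsf{P}}$ is the quadratic Jordan algebra of the cubic form $N_{\mathsf{P}}$ with this $\sharp$-mapping and unit $\mathfrak{1}$ (the point $u_1=u_2=u_3=1$, $x_{ij}=0$): with $T(x,y):=-\partial_x\partial_yN_{\mathsf{P}}(\mathfrak{1})+\partial_xN_{\mathsf{P}}(\mathfrak{1})\partial_yN_{\mathsf{P}}(\mathfrak{1})$, $x\sharp y:=(x+y)^\sharp-x^\sharp-y^\sharp$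 and $U_xy:=T(x,y)x-x^\sharp\sharp y$. $J_{\mathsf{P}}$ is nondegenerate if $\{\sigma\in J\mid U_\sigma y=0\ \forall y\in J\}=\{0\}$. *)

theory Defs
  imports "HOL-Computational_Algebra.Polynomial"
begin

text \<open>The space J = k^9: a point is a function from the nine coordinate names to k.
  The constants P = (p_abc) are given as a function p :: nat => nat => nat => k,
  of which only the values at a,b,c in {1,2} are ever used.\<close>

datatype jc = U1 | U2 | U3 | X11 | X12 | X13 | X21 | X22 | X23

definition ucoord :: "nat \<Rightarrow> jc" where
  "ucoord k = (if k = 1 then U1 else if k = 2 then U2 else U3)"

definition Dk :: "(nat \<Rightarrow> nat \<Rightarrow> nat \<Rightarrow> 'a::comm_ring_1) \<Rightarrow> nat \<Rightarrow> (jc \<Rightarrow> 'a) \<Rightarrow> nat \<Rightarrow> nat \<Rightarrow> 'a" where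
  "Dk p k s i j =
     (if k = 1 then p 1 i j * s X21 - p 2 i j * s X11
      else if k = 2 then p i 1 j * s X22 - p i 2 j * s X12
      else p i j 1 * s X23 - p i j 2 * s X13)"

definition det2 :: "'a::comm_ring_1 \<Rightarrow> 'a \<Rightarrow> 'a \<Rightarrow> 'a \<Rightarrow> 'a" where
  "det2 a b c d = a * d - b * c"

definition detD :: "(nat \<Rightarrow> nat \<Rightarrow> nat \<Rightarrow> 'a::comm_ring_1) \<Rightarrow> nat \<Rightarrow> (jc \<Rightarrow> 'a) \<Rightarrow> 'a" where
  "detD p k s = det2 (- Dk p k s 1 2) (Dk p k s 1 1) (- Dk p k s 2 2) (Dk p k s 2 1)"

text \<open>The sharp map. For x3: the adjugate of the matrix with rows (a,b),(c,d) has rows (d,-b),(-c,a).\<close>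
definition sharp :: "(nat \<Rightarrow> nat \<Rightarrow> nat \<Rightarrow> 'a::comm_ring_1) \<Rightarrow> (jc \<Rightarrow> 'a) \<Rightarrow> (jc \<Rightarrow> 'a)" where
  "sharp p s = (\<lambda>c. case c of
      X11 \<Rightarrow> - s U1 * s X11 + ((- Dk p 3 s 1 2) * s X12 + Dk p 3 s 1 1 * s X22)
    | X21 \<Rightarrow> - s U1 * s X21 + ((- Dk p 3 s 2 2) * s X12 + Dk p 3 s 2 1 * s X22)
    | X12 \<Rightarrow> - s U2 * s X12 + ((- Dk p 1 s 1 2) * s X13 + Dk p 1 s 1 1 * s X23)
    | X22 \<Rightarrow> - s U2 * s X22 + ((- Dk p 1 s 2 2) * s X13 + Dk p 1 s 2 1 * s X23)
    | X13 \<Rightarrow> - s U3 * s X13 - (Dk p 2 s 2 1 * s X11 + (- Dk p 2 s 1 1) * s X21)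
    | X23 \<Rightarrow> - s U3 * s X23 - ((- (- Dk p 2 s 2 2)) * s X11 + (- Dk p 2 s 1 2) * s X21)
    | U1 \<Rightarrow> s U2 * s U3 + detD p 1 s
    | U2 \<Rightarrow> s U3 * s U1 + detD p 2 s
    | U3 \<Rightarrow> s U1 * s U2 + detD p 3 s)"

text \<open>Three times N_P, literally as in the definition:
  sum over k of u_k u_k^# - det D^(k)(x,x^#) - det D^(k)(x^#,x).\<close>
definition N3 :: "(nat \<Rightarrow> nat \<Rightarrow> nat \<Rightarrow> 'a::comm_ring_1) \<Rightarrow> (jc \<Rightarrow> 'a) \<Rightarrow> 'a" where
  "N3 p s = (\<Sum>k\<in>{1,2,3::nat}.
      s (ucoord k) * sharp p s (ucoord k)
      - det2 (- Dk p k s 1 2) (Dk p k (sharp p s) 1 1) (- Dk p k s 2 2) (Dk p k (sharp p s) 2 1)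
      - det2 (- Dk p k (sharp p s) 1 2) (Dk p k s 1 1) (- Dk p k (sharp p s) 2 2) (Dk p k s 2 1))"

text \<open>The cubic form N_P = N3/3, written out with its integer coefficients
  (so that it makes sense in every characteristic, including 3). See lemma NP_N3.\<close>
definition NP :: "(nat \<Rightarrow> nat \<Rightarrow> nat \<Rightarrow> 'a::comm_ring_1) \<Rightarrow> (jc \<Rightarrow> 'a) \<Rightarrow> 'a" where
  "NP p s =
    (s U1) * (s U2) * (s U3)
    - (p 2 1 2) * (p 2 2 1) * (s U1) * (s X11)^2
    + (p 2 1 1) * (p 2 2 2) * (s U1) * (s X11)^2
    - (p 1 2 2) * (p 2 2 1) * (s U2) * (s X12)^2
    - (p 1 2 2) * (p 2 1 2) * (s U3) * (s X13)^2
    + 2 * (p 1 2 2) * (p 2 1 2) * (p 2 2 1) * (s X11) * (s X12) * (s X13)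
    + (p 1 2 2) * (p 2 1 1) * (s U3) * (s X13) * (s X23)
    + (p 1 2 2) * (p 2 1 1) * (s U2) * (s X12) * (s X22)
    - (p 1 2 2) * (p 2 1 1) * (s U1) * (s X11) * (s X21)
    - (p 1 2 2) * (p 2 1 1) * (p 2 2 2) * (s X11) * (s X12) * (s X13)
    - (p 1 2 2) * (p 2 1 1) * (p 2 2 1) * (s X11) * (s X12) * (s X23)
    - (p 1 2 2) * (p 2 1 1) * (p 2 1 2) * (s X11) * (s X13) * (s X22)
    + (p 1 2 2) * (p 2 1 1)^2 * (s X11) * (s X22) * (s X23)
    + (p 1 2 2)^2 * (p 2 1 1) * (s X12) * (s X13) * (s X21)
    + (p 1 2 1) * (p 2 2 2) * (s U2) * (s X12)^2
    + (p 1 2 1) * (p 2 1 2) * (s U3) * (s X13) * (s X23)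
    - (p 1 2 1) * (p 2 1 2) * (s U2) * (s X12) * (s X22)
    + (p 1 2 1) * (p 2 1 2) * (s U1) * (s X11) * (s X21)
    - (p 1 2 1) * (p 2 1 2) * (p 2 2 2) * (s X11) * (s X12) * (s X13)
    - (p 1 2 1) * (p 2 1 2) * (p 2 2 1) * (s X11) * (s X12) * (s X23)
    + (p 1 2 1) * (p 2 1 2)^2 * (s X11) * (s X13) * (s X22)
    - (p 1 2 1) * (p 2 1 1) * (s U3) * (s X23)^2
    + 2 * (p 1 2 1) * (p 2 1 1) * (p 2 2 2) * (s X11) * (s X12) * (s X23)
    - (p 1 2 1) * (p 2 1 1) * (p 2 1 2) * (s X11) * (s X22) * (s X23)
    - (p 1 2 1) * (p 1 2 2) * (p 2 1 2) * (s X12) * (s X13) * (s X21)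
    - (p 1 2 1) * (p 1 2 2) * (p 2 1 1) * (s X12) * (s X21) * (s X23)
    + (p 1 2 1)^2 * (p 2 1 2) * (s X12) * (s X21) * (s X23)
    + (p 1 1 2) * (p 2 2 2) * (s U3) * (s X13)^2
    - (p 1 1 2) * (p 2 2 1) * (s U3) * (s X13) * (s X23)
    + (p 1 1 2) * (p 2 2 1) * (s U2) * (s X12) * (s X22)
    + (p 1 1 2) * (p 2 2 1) * (s U1) * (s X11) * (s X21)
    - (p 1 1 2) * (p 2 2 1) * (p 2 2 2) * (s X11) * (s X12) * (s X13)
    + (p 1 1 2) * (p 2 2 1)^2 * (s X11) * (s X12) * (s X23)
    - (p 1 1 2) * (p 2 1 2) * (p 2 2 1) * (s X11) * (s X13) * (s X22)
    - (p 1 1 2) * (p 2 1 1) * (s U2) * (s X22)^2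
    + 2 * (p 1 1 2) * (p 2 1 1) * (p 2 2 2) * (s X11) * (s X13) * (s X22)
    - (p 1 1 2) * (p 2 1 1) * (p 2 2 1) * (s X11) * (s X22) * (s X23)
    - (p 1 1 2) * (p 1 2 2) * (p 2 2 1) * (s X12) * (s X13) * (s X21)
    - (p 1 1 2) * (p 1 2 2) * (p 2 1 1) * (s X13) * (s X21) * (s X22)
    - (p 1 1 2) * (p 1 2 1) * (s U1) * (s X21)^2
    + 2 * (p 1 1 2) * (p 1 2 1) * (p 2 2 2) * (s X12) * (s X13) * (s X21)
    - (p 1 1 2) * (p 1 2 1) * (p 2 2 1) * (s X12) * (s X21) * (s X23)
    - (p 1 1 2) * (p 1 2 1) * (p 2 1 2) * (s X13) * (s X21) * (s X22)
    + 2 * (p 1 1 2) * (p 1 2 1) * (p 2 1 1) * (s X21) * (s X22) * (s X23)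
    + (p 1 1 2)^2 * (p 2 2 1) * (s X13) * (s X21) * (s X22)
    - (p 1 1 1) * (p 2 2 2) * (s U3) * (s X13) * (s X23)
    - (p 1 1 1) * (p 2 2 2) * (s U2) * (s X12) * (s X22)
    - (p 1 1 1) * (p 2 2 2) * (s U1) * (s X11) * (s X21)
    + (p 1 1 1) * (p 2 2 2)^2 * (s X11) * (s X12) * (s X13)
    + (p 1 1 1) * (p 2 2 1) * (s U3) * (s X23)^2
    - (p 1 1 1) * (p 2 2 1) * (p 2 2 2) * (s X11) * (s X12) * (s X23)
    + (p 1 1 1) * (p 2 1 2) * (s U2) * (s X22)^2
    - (p 1 1 1) * (p 2 1 2) * (p 2 2 2) * (s X11) * (s X13) * (s X22)
    + 2 * (p 1 1 1) * (p 2 1 2) * (p 2 2 1) * (s X11) * (s X22) * (s X23)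
    - (p 1 1 1) * (p 2 1 1) * (p 2 2 2) * (s X11) * (s X22) * (s X23)
    + (p 1 1 1) * (p 1 2 2) * (s U1) * (s X21)^2
    - (p 1 1 1) * (p 1 2 2) * (p 2 2 2) * (s X12) * (s X13) * (s X21)
    + 2 * (p 1 1 1) * (p 1 2 2) * (p 2 2 1) * (s X12) * (s X21) * (s X23)
    + 2 * (p 1 1 1) * (p 1 2 2) * (p 2 1 2) * (s X13) * (s X21) * (s X22)
    - (p 1 1 1) * (p 1 2 2) * (p 2 1 1) * (s X21) * (s X22) * (s X23)
    - (p 1 1 1) * (p 1 2 1) * (p 2 2 2) * (s X12) * (s X21) * (s X23)
    - (p 1 1 1) * (p 1 2 1) * (p 2 1 2) * (s X21) * (s X22) * (s X23)
    - (p 1 1 1) * (p 1 1 2) * (p 2 2 2) * (s X13) * (s X21) * (s X22)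
    - (p 1 1 1) * (p 1 1 2) * (p 2 2 1) * (s X21) * (s X22) * (s X23)
    + (p 1 1 1)^2 * (p 2 2 2) * (s X21) * (s X22) * (s X23)"

definition oneJ :: "jc \<Rightarrow> 'a::comm_ring_1" where
  "oneJ = (\<lambda>c. case c of U1 \<Rightarrow> 1 | U2 \<Rightarrow> 1 | U3 \<Rightarrow> 1 | _ \<Rightarrow> 0)"

text \<open>Directional derivatives of the polynomial N_P (formal, valid in any characteristic):
  the first derivative at a in direction x is the coefficient of t in N_P(a + t x);
  the mixed second derivative in directions x, y is the coefficient of s t in N_P(a + s x + t y).\<close>
definition dN1 :: "(nat \<Rightarrow> nat \<Rightarrow> nat \<Rightarrow> 'a::comm_ring_1) \<Rightarrow> (jc \<Rightarrow> 'a) \<Rightarrow> (jc \<Rightarrow> 'a) \<Rightarrow> 'a" where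
  "dN1 p a x = coeff (NP (\<lambda>i j k. [:p i j k:]) (\<lambda>c. [:a c, x c:])) 1"

definition dN2 :: "(nat \<Rightarrow> nat \<Rightarrow> nat \<Rightarrow> 'a::comm_ring_1) \<Rightarrow> (jc \<Rightarrow> 'a) \<Rightarrow> (jc \<Rightarrow> 'a) \<Rightarrow> (jc \<Rightarrow> 'a) \<Rightarrow> 'a" where
  "dN2 p a x y = coeff (coeff (NP (\<lambda>i j k. [:[:p i j k:]:]) (\<lambda>c. [:[:a c, y c:], [:x c:]:])) 1) 1"

definition Tform :: "(nat \<Rightarrow> nat \<Rightarrow> nat \<Rightarrow> 'a::comm_ring_1) \<Rightarrow> (jc \<Rightarrow> 'a) \<Rightarrow> (jc \<Rightarrow> 'a) \<Rightarrow> 'a" where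
  "Tform p x y = - dN2 p oneJ x y + dN1 p oneJ x * dN1 p oneJ y"

definition sharp_bil :: "(nat \<Rightarrow> nat \<Rightarrow> nat \<Rightarrow> 'a::comm_ring_1) \<Rightarrow> (jc \<Rightarrow> 'a) \<Rightarrow> (jc \<Rightarrow> 'a) \<Rightarrow> (jc \<Rightarrow> 'a)" where
  "sharp_bil p x y = (\<lambda>c. sharp p (\<lambda>d. x d + y d) c - sharp p x c - sharp p y c)"

definition Uop :: "(nat \<Rightarrow> nat \<Rightarrow> nat \<Rightarrow> 'a::comm_ring_1) \<Rightarrow> (jc \<Rightarrow> 'a) \<Rightarrow> (jc \<Rightarrow> 'a) \<Rightarrow> (jc \<Rightarrow> 'a)" where
  "Uop p x y = (\<lambda>c. Tform p x y * x c - sharp_bil p (sharp p x) y c)"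

definition JP_nondegenerate :: "(nat \<Rightarrow> nat \<Rightarrow> nat \<Rightarrow> 'a::comm_ring_1) \<Rightarrow> bool" where
  "JP_nondegenerate p \<longleftrightarrow> {\<sigma>. \<forall>y. Uop p \<sigma> y = (\<lambda>_. 0)} = {(\<lambda>_. 0)}"

definition hyperdet :: "(nat \<Rightarrow> nat \<Rightarrow> nat \<Rightarrow> 'a::comm_ring_1) \<Rightarrow> 'a" where
  "hyperdet p =
     (p 1 1 1)^2 * (p 2 2 2)^2 + (p 1 1 2)^2 * (p 2 2 1)^2 + (p 1 2 1)^2 * (p 2 1 2)^2 + (p 1 2 2)^2 * (p 2 1 1)^2
     - 2 * (p 1 1 1 * p 1 2 2 * p 2 1 1 * p 2 2 2 + p 1 1 1 * p 1 2 1 * p 2 1 2 * p 2 2 2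
            + p 1 1 1 * p 1 1 2 * p 2 2 1 * p 2 2 2 + p 1 2 1 * p 1 2 2 * p 2 1 1 * p 2 1 2
            + p 1 1 2 * p 1 2 2 * p 2 1 1 * p 2 2 1 + p 1 1 2 * p 1 2 1 * p 2 1 2 * p 2 2 1)
     + 4 * (p 1 1 1 * p 1 2 2 * p 2 1 2 * p 2 2 1 + p 1 1 2 * p 1 2 1 * p 2 1 1 * p 2 2 2)"

lemma NP_N3: "3 * NP p s = N3 p s"
  unfolding NP_def N3_def sharp_def detD_def det2_def Dk_def ucoord_def
  by (simp add: numeral_3_eq_3 algebra_simps power2_eq_square)

end

theory Submission
  imports Defs
begin

text \<open>The trace form T is computed explicitly: it is the standard form on the u-coordinates plus,
  for each k, the polar form of the binary quadratic form -det D^(k) in (x_1k, x_2k), and each of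
  these three binary forms has discriminant Cayley's hyperdeterminant. Testing U_\<sigma> against the
  u-unit vectors shows that \<sigma> lies in the radical of U exactly when \<sigma>^# = 0 and T(\<sigma>, -) = 0.
  If the hyperdeterminant is nonzero, T is nondegenerate, so the radical is trivial. If it
  vanishes, an isotropic vector in the radical of the first binary form, placed in the
  (x_11, x_21)-slot, gives a nonzero \<sigma> with \<sigma>^# = 0 and T(\<sigma>, -) = 0.\<close>

definition quad_polar :: "'a::comm_ring_1 \<Rightarrow> 'a \<Rightarrow> 'a \<Rightarrow> 'a \<Rightarrow> 'a \<Rightarrow> 'a \<Rightarrow> 'a \<Rightarrow> 'a" where
  "quad_polar a b c x1 x2 y1 y2 = 2*a*x1*y1 + b*(x1*y2 + x2*y1) + 2*c*x2*y2"

lemma quad_polar_nondegenerate: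
  fixes a b c x1 x2 :: "'a::field"
  assumes disc: "b^2 - 4*a*c \<noteq> 0" and null: "\<And>y1 y2. quad_polar a b c x1 x2 y1 y2 = 0"
  shows "x1 = 0 \<and> x2 = 0"
proof -
  have v: "2*a*x1 + b*x2 = 0" and w: "b*x1 + 2*c*x2 = 0"
    using null[of 1 0] null[of 0 1] by (simp_all add: quad_polar_def)
  have "(b^2 - 4*a*c) * x1 = b*(b*x1 + 2*c*x2) - 2*c*(2*a*x1 + b*x2)"
    and "(b^2 - 4*a*c) * x2 = b*(2*a*x1 + b*x2) - 2*a*(b*x1 + 2*c*x2)"
    by (simp_all add: algebra_simps power2_eq_square)
  with v w have "(b^2 - 4*a*c) * x1 = 0" "(b^2 - 4*a*c) * x2 = 0" by simp_all
  with disc show ?thesis by simp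
qed

lemma quad_polar_degenerate:
  fixes a b c :: "'a::alg_closed_field"
  assumes disc: "b^2 - 4*a*c = 0"
  obtains x1 x2 where "x1 \<noteq> 0 \<or> x2 \<noteq> 0" "\<And>y1 y2. quad_polar a b c x1 x2 y1 y2 = 0"
    "a*x1^2 + b*x1*x2 + c*x2^2 = 0"
proof (cases "a = 0")
  case True
  with disc have "b = 0" by simp
  with True show ?thesis by (intro that[of 1 0]) (simp_all add: quad_polar_def)
next
  case False
  then obtain r where r: "a*r^2 + b*r + c = 0"
    using alg_closed_imp_poly_has_root[of "[:c, b, a:]"] by (auto simp: algebra_simps power2_eq_square)
  have "(2*a*r + b)^2 = 4*a*(a*r^2 + b*r + c) + (b^2 - 4*a*c)"
    by (simp add: algebra_simps power2_eq_square)
  with r disc have h1: "2*a*r + b = 0" by simp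
  have "b*r + 2*c = 2*(a*r^2 + b*r + c) - r*(2*a*r + b)"
    by (simp add: algebra_simps power2_eq_square)
  with r h1 have h2: "b*r + 2*c = 0" by simp
  have "quad_polar a b c r 1 y1 y2 = y1*(2*a*r + b) + y2*(b*r + 2*c)" for y1 y2
    by (simp add: quad_polar_def algebra_simps)
  with h1 h2 r show ?thesis by (intro that[of r 1]) simp_all
qed

text \<open>qa p k, qb p k, qc p k are the coefficients of the binary quadratic form -det D^(k)
  in the coordinates (x_1k, x_2k).\<close>

definition qa :: "(nat \<Rightarrow> nat \<Rightarrow> nat \<Rightarrow> 'a::comm_ring_1) \<Rightarrow> nat \<Rightarrow> 'a" where
  "qa p k = (if k = 1 then p 2 1 2 * p 2 2 1 - p 2 1 1 * p 2 2 2
     else if k = 2 then p 1 2 2 * p 2 2 1 - p 1 2 1 * p 2 2 2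
     else p 1 2 2 * p 2 1 2 - p 1 1 2 * p 2 2 2)"

definition qb :: "(nat \<Rightarrow> nat \<Rightarrow> nat \<Rightarrow> 'a::comm_ring_1) \<Rightarrow> nat \<Rightarrow> 'a" where
  "qb p k = (if k = 1 then p 1 1 1 * p 2 2 2 - p 1 1 2 * p 2 2 1 - p 1 2 1 * p 2 1 2 + p 1 2 2 * p 2 1 1
     else if k = 2 then p 1 1 1 * p 2 2 2 - p 1 1 2 * p 2 2 1 + p 1 2 1 * p 2 1 2 - p 1 2 2 * p 2 1 1
     else p 1 1 1 * p 2 2 2 + p 1 1 2 * p 2 2 1 - p 1 2 1 * p 2 1 2 - p 1 2 2 * p 2 1 1)"

definition qc :: "(nat \<Rightarrow> nat \<Rightarrow> nat \<Rightarrow> 'a::comm_ring_1) \<Rightarrow> nat \<Rightarrow> 'a" where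
  "qc p k = (if k = 1 then p 1 1 2 * p 1 2 1 - p 1 1 1 * p 1 2 2
     else if k = 2 then p 1 1 2 * p 2 1 1 - p 1 1 1 * p 2 1 2
     else p 1 2 1 * p 2 1 1 - p 1 1 1 * p 2 2 1)"

lemma hyperdet_eq_discriminant:
  "k \<in> {1, 2, 3} \<Longrightarrow> hyperdet p = qb p k ^ 2 - 4 * qa p k * qc p k"
  unfolding hyperdet_def qa_def qb_def qc_def
  by (auto simp: algebra_simps power2_eq_square)

lemma coeff_1_eq_poly_pderiv_0: "coeff f 1 = poly (pderiv f) 0"
  by (simp add: poly_0_coeff_0 coeff_pderiv)

lemmas pderiv_poly_simps = pderiv_add pderiv_diff pderiv_mult pderiv_minus pderiv_numeral
  pderiv_pCons pderiv_0 pderiv_1 poly_add poly_diff poly_mult poly_minus poly_pCons poly_0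
  poly_1 poly_numeral pCons_0_0 mult_zero_left mult_zero_right add_0_right add_0_left
  mult_1_left mult_1_right

lemma Tform_explicit:
  fixes x y :: "jc \<Rightarrow> 'a::idom"
  shows "Tform p x y = x U1 * y U1 + x U2 * y U2 + x U3 * y U3
       + quad_polar (qa p 1) (qb p 1) (qc p 1) (x X11) (x X21) (y X11) (y X21)
       + quad_polar (qa p 2) (qb p 2) (qc p 2) (x X12) (x X22) (y X12) (y X22)
       + quad_polar (qa p 3) (qb p 3) (qc p 3) (x X13) (x X23) (y X13) (y X23)"
  \<comment> \<open>Reading the coefficients of t as derivatives at 0 avoids multiplying out N_P(1 + t x).\<close>
  unfolding Tform_def dN1_def dN2_def coeff_1_eq_poly_pderiv_0 NP_def oneJ_def power2_eq_square
  by (simp only: pderiv_poly_simps jc.case)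
    (simp add: quad_polar_def qa_def qb_def qc_def algebra_simps)

lemma Tform_nondegenerate:
  fixes p :: "nat \<Rightarrow> nat \<Rightarrow> nat \<Rightarrow> 'a::field"
  assumes hd: "hyperdet p \<noteq> 0" and null: "\<And>y. Tform p \<sigma> y = 0"
  shows "\<sigma> = (\<lambda>_. 0)"
proof -
  have disc: "qb p k ^ 2 - 4 * qa p k * qc p k \<noteq> 0" if "k \<in> {1, 2, 3}" for k
    using hd hyperdet_eq_discriminant[OF that, of p] by simp
  have "\<sigma> U1 = 0" "\<sigma> U2 = 0" "\<sigma> U3 = 0"
    using null[of "\<lambda>d. if d = U1 then 1 else 0"] null[of "\<lambda>d. if d = U2 then 1 else 0"]
      null[of "\<lambda>d. if d = U3 then 1 else 0"]
    by (simp_all add: Tform_explicit quad_polar_def)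
  moreover have "\<sigma> X11 = 0 \<and> \<sigma> X21 = 0"
    using disc[of 1] null[of "\<lambda>d. if d = X11 then _ else if d = X21 then _ else 0"]
    by (intro quad_polar_nondegenerate[of "qb p 1" "qa p 1" "qc p 1"])
      (simp_all add: Tform_explicit quad_polar_def)
  moreover have "\<sigma> X12 = 0 \<and> \<sigma> X22 = 0"
    using disc[of 2] null[of "\<lambda>d. if d = X12 then _ else if d = X22 then _ else 0"]
    by (intro quad_polar_nondegenerate[of "qb p 2" "qa p 2" "qc p 2"])
      (simp_all add: Tform_explicit quad_polar_def)
  moreover have "\<sigma> X13 = 0 \<and> \<sigma> X23 = 0"
    using disc[of 3] null[of "\<lambda>d. if d = X13 then _ else if d = X23 then _ else 0"]
    by (intro quad_polar_nondegenerate[of "qb p 3" "qa p 3" "qc p 3"])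
      (simp_all add: Tform_explicit quad_polar_def)
  ultimately have "\<sigma> c = 0" for c
    by (cases c) simp_all
  then show ?thesis ..
qed

lemma Tform_zero_left: "Tform p (\<lambda>_. 0) y = (0::'a::idom)"
  by (simp add: Tform_explicit quad_polar_def)

lemma sharp_zero: "sharp p (\<lambda>_. 0) = (\<lambda>_. 0)"
proof
  show "sharp p (\<lambda>_. 0) c = 0" for c
    by (cases c) (simp_all add: sharp_def Dk_def detD_def det2_def)
qed

lemma sharp_bil_zero_left: "sharp_bil p (\<lambda>_. 0) y = (\<lambda>_. 0)"
  by (simp add: sharp_bil_def sharp_zero)

lemma sharp_bil_U_basis:
  "sharp_bil p z (\<lambda>d. if d = U1 then 1 else 0) = (\<lambda>c. case c of
     U2 \<Rightarrow> z U3 | U3 \<Rightarrow> z U2 | X11 \<Rightarrow> - z X11 | X21 \<Rightarrow> - z X21 | _ \<Rightarrow> 0)"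
  "sharp_bil p z (\<lambda>d. if d = U2 then 1 else 0) = (\<lambda>c. case c of
     U1 \<Rightarrow> z U3 | U3 \<Rightarrow> z U1 | X12 \<Rightarrow> - z X12 | X22 \<Rightarrow> - z X22 | _ \<Rightarrow> 0)"
  "sharp_bil p z (\<lambda>d. if d = U3 then 1 else 0) = (\<lambda>c. case c of
     U1 \<Rightarrow> z U2 | U2 \<Rightarrow> z U1 | X13 \<Rightarrow> - z X13 | X23 \<Rightarrow> - z X23 | _ \<Rightarrow> 0)"
  by (rule ext, case_tac c;
      simp add: sharp_bil_def sharp_def Dk_def detD_def det2_def algebra_simps)+

lemma Uop_vanishes_iff:
  fixes \<sigma> :: "jc \<Rightarrow> 'a::idom"
  shows "(\<forall>y. Uop p \<sigma> y = (\<lambda>_. 0)) \<longleftrightarrow> sharp p \<sigma> = (\<lambda>_. 0) \<and> (\<forall>y. Tform p \<sigma> y = 0)"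
proof
  assume "\<forall>y. Uop p \<sigma> y = (\<lambda>_. 0)"
  then have U: "Tform p \<sigma> y * \<sigma> c = sharp_bil p (sharp p \<sigma>) y c" for y c
    by (simp add: Uop_def fun_eq_iff)
  note U1 = U[of "\<lambda>d. if d = U1 then 1 else 0", unfolded sharp_bil_U_basis]
    and U2 = U[of "\<lambda>d. if d = U2 then 1 else 0", unfolded sharp_bil_U_basis]
    and U3 = U[of "\<lambda>d. if d = U3 then 1 else 0", unfolded sharp_bil_U_basis]
  have u: "\<sigma> U1 = 0" "\<sigma> U2 = 0" "\<sigma> U3 = 0"
    using U1[of U1] U2[of U2] U3[of U3] by (simp_all add: Tform_explicit quad_polar_def)
  have sharp_vanishes: "sharp p \<sigma> = (\<lambda>_. 0)"
  proof
    show "sharp p \<sigma> c = 0" for c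
      using U1[of U2] U1[of U3] U2[of U3] U1[of X11] U1[of X21] U2[of X12] U2[of X22]
        U3[of X13] U3[of X23]
      by (cases c) (simp_all add: Tform_explicit quad_polar_def u)
  qed
  have "Tform p \<sigma> y = 0" for y
  proof (cases "\<sigma> = (\<lambda>_. 0)")
    case True
    then show ?thesis by (simp add: Tform_zero_left)
  next
    case False
    then obtain c where "\<sigma> c \<noteq> 0" by auto
    with U[of y c] show ?thesis by (simp add: sharp_vanishes sharp_bil_zero_left)
  qed
  with sharp_vanishes show "sharp p \<sigma> = (\<lambda>_. 0) \<and> (\<forall>y. Tform p \<sigma> y = 0)" by simp
next
  assume "sharp p \<sigma> = (\<lambda>_. 0) \<and> (\<forall>y. Tform p \<sigma> y = 0)"
  then show "\<forall>y. Uop p \<sigma> y = (\<lambda>_. 0)"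
    by (simp add: Uop_def sharp_bil_zero_left)
qed

lemma exists_sharp_zero_Tform_null:
  fixes p :: "nat \<Rightarrow> nat \<Rightarrow> nat \<Rightarrow> 'a::alg_closed_field"
  assumes "hyperdet p = 0"
  obtains \<sigma> where "\<sigma> \<noteq> (\<lambda>_. 0)" "sharp p \<sigma> = (\<lambda>_. 0)" "\<And>y. Tform p \<sigma> y = 0"
proof -
  have "qb p 1 ^ 2 - 4 * qa p 1 * qc p 1 = 0"
    using assms hyperdet_eq_discriminant[of 1 p] by simp
  then obtain v1 v2 where nz: "v1 \<noteq> 0 \<or> v2 \<noteq> 0"
    and polar: "\<And>y1 y2. quad_polar (qa p 1) (qb p 1) (qc p 1) v1 v2 y1 y2 = 0"
    and isotropic: "qa p 1 * v1^2 + qb p 1 * v1 * v2 + qc p 1 * v2^2 = 0"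
    by (rule quad_polar_degenerate) blast
  define \<sigma> where "\<sigma> = (\<lambda>c. if c = X11 then v1 else if c = X21 then v2 else 0)"
  have "\<sigma> \<noteq> (\<lambda>_. 0)"
    using nz by (auto simp: \<sigma>_def fun_eq_iff)
  moreover have "detD p 1 \<sigma> = - (qa p 1 * v1^2 + qb p 1 * v1 * v2 + qc p 1 * v2^2)"
    by (simp add: \<sigma>_def detD_def det2_def Dk_def qa_def qb_def qc_def algebra_simps
        power2_eq_square)
  with isotropic have "sharp p \<sigma> = (\<lambda>_. 0)"
    by (intro ext, simp add: sharp_def split: jc.split)
      (simp add: \<sigma>_def detD_def det2_def Dk_def)
  moreover have "Tform p \<sigma> y = 0" for y
    using polar[of "y X11" "y X21"] by (simp add: Tform_explicit \<sigma>_def quad_polar_def)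
  ultimately show ?thesis by (rule that)
qed

theorem corollary4p7:
  fixes p :: "nat \<Rightarrow> nat \<Rightarrow> nat \<Rightarrow> 'a::alg_closed_field"
  shows "JP_nondegenerate p \<longleftrightarrow> hyperdet p \<noteq> 0"
proof -
  have "JP_nondegenerate p \<longleftrightarrow>
      (\<forall>\<sigma>. sharp p \<sigma> = (\<lambda>_. 0) \<and> (\<forall>y. Tform p \<sigma> y = 0) \<longrightarrow> \<sigma> = (\<lambda>_. 0))"
    unfolding JP_nondegenerate_def Uop_vanishes_iff
    using sharp_zero Tform_zero_left by auto
  also have "\<dots> \<longleftrightarrow> hyperdet p \<noteq> 0"
    using Tform_nondegenerate exists_sharp_zero_Tform_null by metis
  finally show ?thesis .
qed

end
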